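(* Let $N=2^L$ with $L\ge1$ and channel numbers $r_0,\dots,r_{L-1}\ge1$, and fix an output index $y$. There exist representation functions $f_{\theta_1},\dots,f_{\theta_M}\in\mathcal F$ and weights for the deep ConvNet with ReLU activation and max pooling such that its score function $h^D_y$ is not equal (as a function on $(\mathbb R^s)^N$) to the score function $h^S_y$ of any shallow ConvNet with ReLU activation and max pooling whose number of hidden channels satisfies $Z<\min\{r_0,M\}^{N/2}\cdot\frac{2}{M\cdot N}$ (for any choice of its representation functions in $\mathcal F$ and its weights).
   Context: Inputs are $X=(\mathbf x_1,\dots,\mathbf x_N)\in(\mathbb R^s)^N$. Representation functions are taken from a parametric family $\mathcal F=\{f_\theta:\mathbb R^s\to\mathbb R:\theta\in\Theta\}$ assumed throughout to satisfy: (continuity) $f_\theta(\mathbf x)$ is continuous in $\theta$ and $\mathbf x$; (non-degeneracy) for any pairwise distinct $\mathbf x^{(1)},\dots,\mathbf x^{(M)}\in\mathbb R^s$ there exist $f_{\theta_1},\dots,f_{\theta_M}\in\mathcal F$ such that $F=(f_{\theta_d}(\mathbf x^{(i)}))_{i,d\in[M]}$ is non-singular. ReLU activation with max pooling means $\sigma(z)=\max\{0,z\}$ and $P=\max$. Shallow ConvNet with $Z$ hidden channels: given $f_{\theta_1},\dots,f_{\theta_M}\in\mathcal F$, weights $\mathbf a^{z,i}\in\mathbb R^M$ ($z\in[Z],i\in[N]$), $\mathbf a^y\in\mathbb R^Z$: $h^S_y(X)=\sum_{z=1}^Z a^y_z\,P_{i\in[N]}\big(\sigma(\sum_{d=1}^M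 a^{z,i}_d f_{\theta_d}(\mathbf x_i))\big)$. Deep ConvNet with channel numbers $r_0,\dots,r_{L-1}$: given $f_{\theta_1},\dots,f_{\theta_M}\in\mathcal F$, weights $\mathbf a^{0,j,\gamma}\in\mathbb R^M$ ($j\in[N],\gamma\in[r_0]$), $\mathbf a^{l,j,\gamma}\in\mathbb R^{r_{l-1}}$ ($l\in[L-1]$, $j\in[N/2^l]$, $\gamma\in[r_l]$), $\mathbf a^{L,1,y}\in\mathbb R^{r_{L-1}}$: $u^0_{j,\gamma}=\sigma(\sum_d a^{0,j,\gamma}_d f_{\theta_d}(\mathbf x_j))$; for $l=0,\dots,L-1$, $v^l_{j,\gamma}=P(u^l_{2j-1,\gamma},u^l_{2j,\gamma})$ for $j\in[N/2^{l+1}]$, and for $l\ge1$, $u^l_{j,\gamma}=\sigma(\sum_{\alpha=1}^{r_{l-1}}a^{l,j,\gamma}_\alpha v^{l-1}_{j,\alpha})$ for $j\in[N/2^l]$; $h^D_y(X)=\sum_{\alpha=1}^{r_{L-1}}a^{L,1,y}_\alpha v^{L-1}_{1,\alpha}$. *)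

theory Defs
  imports "HOL-Analysis.Analysis" "Jordan_Normal_Form.Determinant"
begin

definition relu :: "real \<Rightarrow> real" where
  "relu z = max 0 z"

definition rep_matrix :: "('p \<Rightarrow> 'x \<Rightarrow> real) \<Rightarrow> nat \<Rightarrow> (nat \<Rightarrow> 'p) \<Rightarrow> (nat \<Rightarrow> 'x) \<Rightarrow> real mat" where
  "rep_matrix f M th xs = mat M M (\<lambda>(i, d). f (th d) (xs i))"

text \<open>Shallow ConvNet score h^S_y (ReLU, max pooling); indices 0-based:
  z < Z, i < N, d < M.  Weights a z i d = a^{z,i}_d, ay y z = a^y_z.\<close>
definition shallow_score ::
  "('p \<Rightarrow> 'x \<Rightarrow> real) \<Rightarrow> nat \<Rightarrow> nat \<Rightarrow> nat \<Rightarrow> (nat \<Rightarrow> 'p)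
   \<Rightarrow> (nat \<Rightarrow> nat \<Rightarrow> nat \<Rightarrow> real) \<Rightarrow> (nat \<Rightarrow> nat \<Rightarrow> real) \<Rightarrow> nat \<Rightarrow> (nat \<Rightarrow> 'x) \<Rightarrow> real" where
  "shallow_score f N M Z th a ay y X =
     (\<Sum>z<Z. ay y z * Max ((\<lambda>i. relu (\<Sum>d<M. a z i d * f (th d) (X i))) ` {..<N}))"

text \<open>Deep ConvNet hidden units u^l_{j,gamma} (0-based j, gamma).
  A0 j g d = a^{0,j,g}_d;  A l j g alpha = a^{l,j,g}_alpha for l >= 1;
  pooling v^l_{j,g} = max (u^l_{2j,g}) (u^l_{2j+1,g}).\<close>
fun deep_u ::
  "('p \<Rightarrow> 'x \<Rightarrow> real) \<Rightarrow> nat \<Rightarrow> (nat \<Rightarrow> 'p) \<Rightarrow> (nat \<Rightarrow> nat)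
   \<Rightarrow> (nat \<Rightarrow> nat \<Rightarrow> nat \<Rightarrow> real) \<Rightarrow> (nat \<Rightarrow> nat \<Rightarrow> nat \<Rightarrow> nat \<Rightarrow> real)
   \<Rightarrow> (nat \<Rightarrow> 'x) \<Rightarrow> nat \<Rightarrow> nat \<Rightarrow> nat \<Rightarrow> real" where
  "deep_u f M th r A0 A X 0 j g = relu (\<Sum>d<M. A0 j g d * f (th d) (X j))"
| "deep_u f M th r A0 A X (Suc l) j g =
     relu (\<Sum>al<r l. A (Suc l) j g al *
             max (deep_u f M th r A0 A X l (2*j) al) (deep_u f M th r A0 A X l (2*j+1) al))"

definition deep_v ::
  "('p \<Rightarrow> 'x \<Rightarrow> real) \<Rightarrow> nat \<Rightarrow> (nat \<Rightarrow> 'p) \<Rightarrow> (nat \<Rightarrow> nat)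
   \<Rightarrow> (nat \<Rightarrow> nat \<Rightarrow> nat \<Rightarrow> real) \<Rightarrow> (nat \<Rightarrow> nat \<Rightarrow> nat \<Rightarrow> nat \<Rightarrow> real)
   \<Rightarrow> (nat \<Rightarrow> 'x) \<Rightarrow> nat \<Rightarrow> nat \<Rightarrow> nat \<Rightarrow> real" where
  "deep_v f M th r A0 A X l j g =
     max (deep_u f M th r A0 A X l (2*j) g) (deep_u f M th r A0 A X l (2*j+1) g)"

text \<open>Deep ConvNet score h^D_y with L layers; Aout y alpha = a^{L,1,y}_alpha.\<close>
definition deep_score ::
  "('p \<Rightarrow> 'x \<Rightarrow> real) \<Rightarrow> nat \<Rightarrow> nat \<Rightarrow> (nat \<Rightarrow> 'p) \<Rightarrow> (nat \<Rightarrow> nat)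
   \<Rightarrow> (nat \<Rightarrow> nat \<Rightarrow> nat \<Rightarrow> real) \<Rightarrow> (nat \<Rightarrow> nat \<Rightarrow> nat \<Rightarrow> nat \<Rightarrow> real)
   \<Rightarrow> (nat \<Rightarrow> nat \<Rightarrow> real) \<Rightarrow> nat \<Rightarrow> (nat \<Rightarrow> 'x) \<Rightarrow> real" where
  "deep_score f L M th r A0 A Aout y X =
     (\<Sum>al<r (L - 1). Aout y al * deep_v f M th r A0 A X (L - 1) 0 al)"

end

theory Submission
  imports Defs "HOL-Library.Function_Algebras"
begin

(*
  Write m = min r_0 M and h = N/2, and feed the networks inputs whose even positions carry points
  x_(ke t) and whose odd positions carry x_(ko t) (t < h), for m fixed distinct points x_q and index
  maps ke, ko into {0..<m}. Inverting the representation matrix of these points, layer 0 of the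
  deep network outputs one-hot codes of the indices; after pooling a pair of positions, the sum
  over channels is 1 if the pair carries equal indices and 2 otherwise, and max pooling further up
  returns the worst pair. So the deep score, as a matrix indexed by (ke, ko), is 2J - I, of full
  rank m^h.

  In a shallow network the max pooling over all positions is the maximum of the poolings over even
  and over odd positions; per channel the even part takes at most h m values, so every row of the
  score matrix lies in the span of at most Z h m functions of ko. Hence m^h <= Z h m <= Z N M / 2.
*)

definition scale_fun :: "real \<Rightarrow> ('a \<Rightarrow> real) \<Rightarrow> 'a \<Rightarrow> real" where
  "scale_fun c v = (\<lambda>x. c * v x)"

interpretation fun_vec: vector_space "scale_fun :: real \<Rightarrow> ('a \<Rightarrow> real) \<Rightarrow> 'a \<Rightarrow> real"
  by unfold_locales (auto simp: scale_fun_def fun_eq_iff algebra_simps)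

lemma sum_fun_apply: "(\<Sum>i\<in>A. (g i :: 'a \<Rightarrow> 'b::comm_monoid_add)) x = (\<Sum>i\<in>A. g i x)"
  by (induction A rule: infinite_finite_induct) auto

lemma independent_rows_2J_minus_I:
  fixes rho :: "'a \<Rightarrow> 'a \<Rightarrow> real"
  assumes fin: "finite R" and val: "\<And>a b. a \<in> R \<Longrightarrow> b \<in> R \<Longrightarrow> rho a b = (if a = b then 1 else 2)"
  shows "inj_on rho R" "fun_vec.independent (rho ` R)"
proof -
  show inj: "inj_on rho R"
  proof (rule inj_onI)
    fix a b assume "a \<in> R" "b \<in> R" "rho a = rho b"
    then have "rho a a = rho b a" by simp
    then show "a = b" using val[of a a] val[of b a] \<open>a \<in> R\<close> \<open>b \<in> R\<close> by (auto split: if_splits)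
  qed
  show "fun_vec.independent (rho ` R)"
  proof (rule fun_vec.independent_if_scalars_zero)
    show "finite (rho ` R)" using fin by simp
    fix u v assume sum0: "(\<Sum>x\<in>rho ` R. scale_fun (u x) x) = 0" and v: "v \<in> rho ` R"
    define c where "c a = u (rho a)" for a
    define S where "S = (\<Sum>a\<in>R. c a)"
    \<comment> \<open>Evaluating the relation at b gives 2S - c b = 0, so all coefficients equal 2S and S = 2 |R| S.\<close>
    have c_eq: "c b = 2 * S" if b: "b \<in> R" for b
    proof -
      have "0 = (\<Sum>a\<in>R. scale_fun (c a) (rho a)) b"
        using sum0 by (simp add: sum.reindex[OF inj] c_def)
      also have "\<dots> = (\<Sum>a\<in>R. 2 * c a - (if a = b then c a else 0))"
        by (auto simp: sum_fun_apply scale_fun_def val b intro!: sum.cong)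
      also have "\<dots> = 2 * S - c b"
        by (simp add: sum_subtractf sum_distrib_left[symmetric] S_def fin b)
      finally show ?thesis by simp
    qed
    have "S = (\<Sum>b\<in>R. c b)" by (fact S_def)
    also have "\<dots> = (\<Sum>b\<in>R. 2 * S)" using c_eq by (intro sum.cong) auto
    also have "\<dots> = real (card R) * 2 * S" by simp
    finally have "S = real (card R) * 2 * S" .
    moreover have "card R \<ge> 1" using v fin by (auto simp: Suc_le_eq card_gt_0_iff)
    ultimately have "S * (2 * real (card R) - 1) = 0" by (simp add: algebra_simps)
    moreover have "2 * real (card R) - 1 \<noteq> 0" using \<open>card R \<ge> 1\<close> by linarith
    ultimately have "S = 0" by simp
    then show "u v = 0" using v c_eq by (auto simp: c_def)
  qed
qed

lemma card_le_of_rows_2J_minus_I_in_span: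
  fixes rho :: "'a \<Rightarrow> 'a \<Rightarrow> real"
  assumes "finite R" "finite S" "rho ` R \<subseteq> fun_vec.span S"
    and "\<And>a b. a \<in> R \<Longrightarrow> b \<in> R \<Longrightarrow> rho a b = (if a = b then 1 else 2)"
  shows "card R \<le> card S"
proof -
  note rows = independent_rows_2J_minus_I[OF assms(1,4)]
  have "card (rho ` R) \<le> card S"
    using fun_vec.independent_span_bound[OF assms(2) rows(2) assms(3)] by simp
  then show ?thesis by (simp add: card_image[OF rows(1)])
qed

lemma relu_nonneg_eq [simp]: "0 \<le> z \<Longrightarrow> relu z = z"
  by (simp add: relu_def)

lemma all_less_double: "(\<forall>t<2 * (n::nat). P t) \<longleftrightarrow> (\<forall>t<n. P t) \<and> (\<forall>t<n. P (n + t))"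
proof safe
  fix t assume low: "\<forall>t<n. P t" and high: "\<forall>t<n. P (n + t)" and t: "t < 2*n"
  show "P t"
  proof (cases "t < n")
    case False
    then have "t = n + (t - n)" "t - n < n" using t by auto
    then show ?thesis using high by metis
  qed (use low in simp)
qed auto

definition pairs_agree :: "(nat \<Rightarrow> 'a) \<Rightarrow> nat \<Rightarrow> nat \<Rightarrow> bool" where
  "pairs_agree k n j \<longleftrightarrow> (\<forall>t<n. k (2 * (j * n + t)) = k (2 * (j * n + t) + 1))"

lemma pairs_agree_double:
  "pairs_agree k (2 * n) j \<longleftrightarrow> pairs_agree k n (2 * j) \<and> pairs_agree k n (2 * j + 1)"
proof -
  have "j * (2 * n) + t = 2 * j * n + t" "j * (2 * n) + (n + t) = (2 * j + 1) * n + t" for t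
    by (simp_all add: algebra_simps)
  then show ?thesis
    unfolding pairs_agree_def all_less_double[of n] by presburger
qed

lemma sum_max_one_hot:
  fixes a b n :: nat
  assumes "a < n" "b < n"
  shows "(\<Sum>g<n. max (of_bool (a = g)) (of_bool (b = g)) :: real) = (if a = b then 1 else 2)"
proof (cases "a = b")
  case False
  then have "max (of_bool (a = g)) (of_bool (b = g)) = (of_bool (a = g) + of_bool (b = g) :: real)" for g
    by auto
  with False assms show ?thesis by (simp add: sum.distrib)
qed (use assms in simp)

text \<open>Positions beyond 2h get index 0, so that an interleaved index map stays below m everywhere.\<close>

definition interleave :: "nat \<Rightarrow> (nat \<Rightarrow> nat) \<Rightarrow> (nat \<Rightarrow> nat) \<Rightarrow> nat \<Rightarrow> nat" where
  "interleave h ke ko i = (if i < 2 * h then (if even i then ke else ko) (i div 2) else 0)"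

lemma interleave_even [simp]: "t < h \<Longrightarrow> interleave h ke ko (2 * t) = ke t"
  by (simp add: interleave_def)

lemma interleave_odd [simp]: "t < h \<Longrightarrow> interleave h ke ko (Suc (2 * t)) = ko t"
  by (simp add: interleave_def)

lemma interleave_less:
  assumes "0 < m" "\<forall>t<h. ke t < m" "\<forall>t<h. ko t < m"
  shows "interleave h ke ko i < m"
  using assms by (auto simp: interleave_def)

lemma pairs_agree_interleave: "pairs_agree (interleave h ke ko) h 0 \<longleftrightarrow> (\<forall>t<h. ke t = ko t)"
  by (simp add: pairs_agree_def)

lemma deep_u_Suc:
  "deep_u f M th r A0 A X (Suc l) j g =
     relu (\<Sum>al<r l. A (Suc l) j g al * deep_v f M th r A0 A X l j al)"
  by (simp add: deep_v_def)

lemma deep_u_0_one_hot: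
  assumes B: "\<And>i g. i < m \<Longrightarrow> g < m \<Longrightarrow> (\<Sum>d<m. f (th d) (xs i) * B d g) = of_bool (i = g)"
    and "m \<le> M" and k: "k j < m"
  shows "deep_u f M th r (\<lambda>j g d. if d < m \<and> g < m then B d g else 0) A (\<lambda>i. xs (k i)) 0 j g
    = of_bool (k j = g)"
proof (cases "g < m")
  case True
  have "(\<Sum>d<M. (if d < m \<and> g < m then B d g else 0) * f (th d) (xs (k j)))
      = (\<Sum>d<m. f (th d) (xs (k j)) * B d g)"
    using \<open>m \<le> M\<close> True by (intro sum.mono_neutral_cong_right) auto
  then show ?thesis using B[OF k True] by simp
qed (use k in \<open>auto simp: relu_def\<close>)

text \<open>Weights of the separating deep network above layer 0: layer 1 adds up all channels of the
  pooled one-hot codes, every later layer (and the output) just passes on channel 0.\<close>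

definition relay_output :: "nat \<Rightarrow> nat \<Rightarrow> nat \<Rightarrow> real" where
  "relay_output l y al = (if l = 1 \<or> al = 0 then 1 else 0)"

definition relay_weights :: "nat \<Rightarrow> nat \<Rightarrow> nat \<Rightarrow> nat \<Rightarrow> real" where
  "relay_weights l j = relay_output l"

lemma deep_channel_sum:
  assumes u0: "\<And>j g. deep_u f M th r A0 relay_weights X 0 j g = of_bool (k j = g)"
    and k: "\<And>j. k j < r 0"
    and r: "\<forall>l<L. 1 \<le> r l"
  shows "l < L \<Longrightarrow> (\<Sum>al<r l. relay_output (Suc l) y al * deep_v f M th r A0 relay_weights X l j al)
    = (if pairs_agree k (2 ^ l) j then 1 else 2)"
proof (induction l arbitrary: j y)
  case 0
  have "(\<Sum>al<r 0. relay_output 1 y al * deep_v f M th r A0 relay_weights X 0 j al)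
      = (\<Sum>al<r 0. max (of_bool (k (2 * j) = al)) (of_bool (k (2 * j + 1) = al)))"
    unfolding deep_v_def u0 by (simp add: relay_output_def)
  also have "\<dots> = (if k (2 * j) = k (2 * j + 1) then 1 else 2)"
    by (rule sum_max_one_hot[OF k k])
  finally show ?case by (simp add: pairs_agree_def)
next
  case (Suc l)
  have unit: "deep_u f M th r A0 relay_weights X (Suc l) i 0 = (if pairs_agree k (2 ^ l) i then 1 else 2)"
    for i
    unfolding deep_u_Suc relay_weights_def[of "Suc l"] Suc.IH[OF Suc_lessD[OF Suc.prems]] by simp
  have "(\<Sum>al<r (Suc l). relay_output (Suc (Suc l)) y al * deep_v f M th r A0 relay_weights X (Suc l) j al)
      = (\<Sum>al<r (Suc l). if al = 0 then deep_v f M th r A0 relay_weights X (Suc l) j al else 0)"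
    by (intro sum.cong) (auto simp: relay_output_def)
  also have "\<dots> = deep_v f M th r A0 relay_weights X (Suc l) j 0"
    using r Suc.prems by (simp add: Suc_le_eq)
  also have "\<dots> = (if pairs_agree k (2 ^ Suc l) j then 1 else 2)"
    unfolding deep_v_def unit power_Suc pairs_agree_double by simp
  finally show ?case .
qed

lemma deep_score_value:
  assumes u0: "\<And>j g. deep_u f M th r A0 relay_weights X 0 j g = of_bool (k j = g)"
    and k: "\<And>j. k j < r 0"
    and r: "\<forall>l<L. 1 \<le> r l"
    and L: "1 \<le> L"
  shows "deep_score f L M th r A0 relay_weights (relay_output L) y X
    = (if pairs_agree k (2 ^ (L - 1)) 0 then 1 else 2)"
  using deep_channel_sum[OF u0 k r, where l = "L - 1" and j = 0 and y = y] L
  by (simp add: deep_score_def)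

lemma rep_matrix_right_inverse:
  assumes "det (rep_matrix f m th xs) \<noteq> 0"
  shows "\<exists>B. \<forall>i<m. \<forall>g<m. (\<Sum>d<m. f (th d) (xs i) * B d g) = of_bool (i = g)"
proof -
  have F: "rep_matrix f m th xs \<in> carrier_mat m m" by (simp add: rep_matrix_def)
  obtain B where B: "B \<in> carrier_mat m m" and FB: "rep_matrix f m th xs * B = 1\<^sub>m m"
    using det_non_zero_imp_unit[OF F assms] by (auto simp: Units_def ring_mat_def)
  show ?thesis
  proof (intro exI allI impI)
    fix i g assume "i < m" "g < m"
    then show "(\<Sum>d<m. f (th d) (xs i) * B $$ (d, g)) = of_bool (i = g)"
      using arg_cong[OF FB, of "\<lambda>C. C $$ (i, g)"] B
      by (simp add: index_mult_mat scalar_prod_def rep_matrix_def atLeast0LessThan)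
  qed
qed

lemma ex_deep_score_interleave:
  fixes xs :: "nat \<Rightarrow> 'x"
  assumes th: "\<forall>d<m. th d \<in> \<Theta>" and det: "det (rep_matrix f m th xs) \<noteq> 0"
    and m: "0 < m" "m \<le> M" "m \<le> r 0"
    and r: "\<forall>l<L. 1 \<le> r l" and L: "1 \<le> L"
  shows "\<exists>th' A0. (\<forall>d<M. th' d \<in> \<Theta>) \<and>
    (\<forall>ke ko :: nat \<Rightarrow> nat. (\<forall>t<2 ^ (L - 1). ke t < m) \<longrightarrow> (\<forall>t<2 ^ (L - 1). ko t < m) \<longrightarrow>
      deep_score f L M th' r A0 relay_weights (relay_output L) y
        (\<lambda>i. xs (interleave (2 ^ (L - 1)) ke ko i))
      = (if \<forall>t<2 ^ (L - 1). ke t = ko t then 1 else 2))"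
proof -
  define th' where "th' d = th (if d < m then d else 0)" for d
  have "rep_matrix f m th' xs = rep_matrix f m th xs"
    by (auto simp: rep_matrix_def th'_def intro!: cong_mat)
  then obtain B where B: "\<And>i g. i < m \<Longrightarrow> g < m \<Longrightarrow> (\<Sum>d<m. f (th' d) (xs i) * B d g) = of_bool (i = g)"
    using rep_matrix_right_inverse det by metis
  let ?A0 = "\<lambda>j g d. if d < m \<and> g < m then B d g else 0"
  have "\<forall>d<M. th' d \<in> \<Theta>" using th m(1) by (simp add: th'_def)
  moreover have "deep_score f L M th' r ?A0 relay_weights (relay_output L) y
        (\<lambda>i. xs (interleave (2 ^ (L - 1)) ke ko i))
      = (if \<forall>t<2 ^ (L - 1). ke t = ko t then 1 else 2)"
    if "\<forall>t<2 ^ (L - 1). ke t < m" "\<forall>t<2 ^ (L - 1). ko t < m" for ke ko :: "nat \<Rightarrow> nat"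
  proof -
    let ?k = "interleave (2 ^ (L - 1)) ke ko"
    have k: "?k i < m" for i
      using interleave_less m(1) that by blast
    have u0: "deep_u f M th' r ?A0 A (\<lambda>i. xs (?k i)) 0 j g = of_bool (?k j = g)" for A j g
      by (rule deep_u_0_one_hot) (use B m k in auto)
    show ?thesis
      by (subst deep_score_value[where k = ?k, OF u0 order.strict_trans2[OF k m(3)] r L])
        (simp add: pairs_agree_interleave)
  qed
  ultimately show ?thesis by blast
qed

lemma lessThan_double_eq_even_Un_odd:
  "{..<2 * (h::nat)} = (\<lambda>t. 2 * t) ` {..<h} \<union> (\<lambda>t. 2 * t + 1) ` {..<h}"
proof (intro equalityI subsetI)
  fix i :: nat assume "i \<in> {..<2 * h}"
  then have "i div 2 < h" by auto
  moreover have "i = 2 * (i div 2) \<or> i = 2 * (i div 2) + 1" by presburger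
  ultimately show "i \<in> (\<lambda>t. 2 * t) ` {..<h} \<union> (\<lambda>t. 2 * t + 1) ` {..<h}" by blast
qed auto

lemma Max_even_odd:
  fixes g :: "nat \<Rightarrow> 'a::linorder"
  assumes "0 < h"
  shows "Max (g ` {..<2 * h}) = max (Max ((\<lambda>t. g (2 * t)) ` {..<h})) (Max ((\<lambda>t. g (2 * t + 1)) ` {..<h}))"
  unfolding lessThan_double_eq_even_Un_odd image_Un image_image
  using assms by (subst Max_Un) auto

lemma shallow_score_interleave_span:
  fixes xs :: "nat \<Rightarrow> 'x"
  assumes "0 < h"
  shows "\<exists>S. finite S \<and> card S \<le> Z * (h * m) \<and>
    (\<forall>ke. (\<forall>t<h. ke t < m) \<longrightarrow>
      (\<lambda>ko. shallow_score f (2 * h) M Z th a ay y (\<lambda>i. xs (interleave h ke ko i))) \<in> fun_vec.span S)"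
proof -
  define w where "w z i q = relu (\<Sum>d<M. a z i d * f (th d) (xs q))" for z i q
  define P where "P z ke = Max ((\<lambda>t. w z (2 * t) (ke t)) ` {..<h})" for z ke
  define Q where "Q z ko = Max ((\<lambda>t. w z (2 * t + 1) (ko t)) ` {..<h})" for z ko
  define W where "W z = (\<lambda>(t, q). w z (2 * t) q) ` ({..<h} \<times> {..<m})" for z
  define S where "S = (\<Union>z<Z. (\<lambda>p ko. max p (Q z ko)) ` W z)"
  \<comment> \<open>The max-pooling of a channel splits over even and odd positions; for fixed even part it
    takes one of at most h m values, leaving a function of the odd part alone.\<close>
  have score: "shallow_score f (2 * h) M Z th a ay y (\<lambda>i. xs (interleave h ke ko i))
      = (\<Sum>z<Z. ay y z * max (P z ke) (Q z ko))" for ke ko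
    unfolding shallow_score_def Max_even_odd[OF assms] P_def Q_def w_def
    by (simp cong: image_cong_simp)
  have P_in: "P z ke \<in> W z" if "\<forall>t<h. ke t < m" for z ke
  proof -
    have "P z ke \<in> (\<lambda>t. w z (2 * t) (ke t)) ` {..<h}"
      unfolding P_def using assms by (intro Max_in) auto
    then obtain t where "t < h" "P z ke = w z (2 * t) (ke t)" by auto
    then show ?thesis
      using that unfolding W_def by (intro image_eqI[where x = "(t, ke t)"]) auto
  qed
  have "card S \<le> (\<Sum>z<Z. card ((\<lambda>p ko. max p (Q z ko)) ` W z))"
    unfolding S_def by (rule card_UN_le) simp
  also have "\<dots> \<le> (\<Sum>z<Z. card ({..<h} \<times> {..<m}))"
    unfolding W_def by (intro sum_mono order.trans[OF card_image_le card_image_le]) auto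
  finally have "card S \<le> Z * (h * m)" by simp
  moreover have "finite S" by (simp add: S_def W_def)
  moreover have "(\<lambda>ko. shallow_score f (2 * h) M Z th a ay y (\<lambda>i. xs (interleave h ke ko i)))
      \<in> fun_vec.span S" if "\<forall>t<h. ke t < m" for ke
  proof -
    have "(\<Sum>z<Z. scale_fun (ay y z) (\<lambda>ko. max (P z ke) (Q z ko))) \<in> fun_vec.span S"
      using P_in[OF that] by (intro fun_vec.span_sum fun_vec.span_scale fun_vec.span_base) (auto simp: S_def)
    moreover have "(\<lambda>ko. shallow_score f (2 * h) M Z th a ay y (\<lambda>i. xs (interleave h ke ko i)))
        = (\<Sum>z<Z. scale_fun (ay y z) (\<lambda>ko. max (P z ke) (Q z ko)))"
      by (simp add: score fun_eq_iff sum_fun_apply scale_fun_def)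
    ultimately show ?thesis by simp
  qed
  ultimately show ?thesis by blast
qed

lemma shallow_score_interleave_channel_bound:
  fixes xs :: "nat \<Rightarrow> 'x"
  assumes "0 < h" "m \<le> M"
    and eq: "\<forall>ke ko :: nat \<Rightarrow> nat. (\<forall>t<h. ke t < m) \<longrightarrow> (\<forall>t<h. ko t < m) \<longrightarrow>
      shallow_score f (2 * h) M Z th a ay y (\<lambda>i. xs (interleave h ke ko i))
      = (if \<forall>t<h. ke t = ko t then 1 else 2)"
  shows "real m ^ h * 2 / (real M * real (2 * h)) \<le> real Z"
proof -
  obtain S where S: "finite S" "card S \<le> Z * (h * m)"
    and span: "\<forall>ke. (\<forall>t<h. ke t < m) \<longrightarrow>
      (\<lambda>ko. shallow_score f (2 * h) M Z th a ay y (\<lambda>i. xs (interleave h ke ko i))) \<in> fun_vec.span S"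
    using shallow_score_interleave_span[OF assms(1), where Z = Z and m = m and f = f and M = M
        and th = th and a = a and ay = ay and y = y and xs = xs] by blast
  define R where "R = PiE {..<h} (\<lambda>_. {..<m})"
  have R_less: "\<forall>t<h. ke t < m" if "ke \<in> R" for ke
    using that by (auto simp: R_def PiE_iff)
  have "card R \<le> card S"
  proof (rule card_le_of_rows_2J_minus_I_in_span)
    show "finite R" by (simp add: R_def finite_PiE)
    show "(\<lambda>ke ko. shallow_score f (2 * h) M Z th a ay y (\<lambda>i. xs (interleave h ke ko i))) ` R
        \<subseteq> fun_vec.span S"
      using span R_less by (intro image_subsetI) blast
    fix ke ko assume ke: "ke \<in> R" and ko: "ko \<in> R"
    have "(\<forall>t<h. ke t = ko t) \<longleftrightarrow> ke = ko"
      using ke ko by (auto simp: R_def intro: PiE_ext)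
    moreover have "shallow_score f (2 * h) M Z th a ay y (\<lambda>i. xs (interleave h ke ko i))
        = (if \<forall>t<h. ke t = ko t then 1 else 2)"
      using eq R_less[OF ke] R_less[OF ko] by blast
    ultimately show "shallow_score f (2 * h) M Z th a ay y (\<lambda>i. xs (interleave h ke ko i))
        = (if ke = ko then 1 else 2)"
      by simp
  qed (use S in simp)
  then have "m ^ h \<le> Z * (h * m)" using S by (simp add: R_def card_PiE)
  also have "\<dots> \<le> Z * (h * M)" using assms(2) by simp
  finally have "real m ^ h * 2 \<le> real Z * (real M * real (2 * h))"
    unfolding of_nat_le_iff[symmetric, where 'a = real] by (simp add: algebra_simps)
  then show ?thesis
    by (cases "M = 0") (use assms(1) in \<open>simp_all add: divide_le_eq\<close>)
qed

theorem claim9: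
  fixes f :: "'p::topological_space \<Rightarrow> real^'s \<Rightarrow> real"
    and \<Theta> :: "'p set"
    and L N M y :: nat
    and r :: "nat \<Rightarrow> nat"
  assumes cont: "continuous_on (\<Theta> \<times> UNIV) (\<lambda>(\<theta>, x). f \<theta> x)"
    and nondeg: "\<And>K (xs :: nat \<Rightarrow> real^'s).
       (\<forall>i<K. \<forall>j<K. i \<noteq> j \<longrightarrow> xs i \<noteq> xs j) \<Longrightarrow>
       \<exists>th. (\<forall>d<K. th d \<in> \<Theta>) \<and> det (rep_matrix f K th xs) \<noteq> 0"
    and L: "L \<ge> 1"
    and N: "N = 2 ^ L"
    and r: "\<forall>l<L. r l \<ge> 1"
  shows "\<exists>th A0 A Aout. (\<forall>d<M. th d \<in> \<Theta>) \<and>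
     (\<forall>Z th' a ay. (\<forall>d<M. th' d \<in> \<Theta>) \<and>
        real Z < real (min (r 0) M) ^ (N div 2) * 2 / (real M * real N) \<longrightarrow>
        (\<lambda>X. deep_score f L M th r A0 A Aout y X) \<noteq> (\<lambda>X. shallow_score f N M Z th' a ay y X))"
proof (cases "M = 0")
  case False
  define m where "m = min (r 0) M"
  define h :: nat where "h = 2 ^ (L - 1)"
  have m: "0 < m" "m \<le> M" "m \<le> r 0" using False r L by (auto simp: m_def)
  obtain L' where L': "L = Suc L'" using L by (cases L) auto
  have h: "0 < h" "N = 2 * h" by (simp_all add: N h_def L')
  define xs :: "nat \<Rightarrow> real^'s" where "xs q = (\<chi> _. real q)" for q
  have "xs i \<noteq> xs j" if "i \<noteq> j" for i j
    using that by (metis xs_def vec_lambda_beta of_nat_eq_iff)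
  then obtain th0 where "\<forall>d<m. th0 d \<in> \<Theta>" "det (rep_matrix f m th0 xs) \<noteq> 0"
    using nondeg[of m xs] by blast
  from ex_deep_score_interleave[OF this m r L, where y = y, folded h_def]
  obtain th A0 where th: "\<forall>d<M. th d \<in> \<Theta>" and deep: "\<forall>ke ko :: nat \<Rightarrow> nat.
      (\<forall>t<h. ke t < m) \<longrightarrow> (\<forall>t<h. ko t < m) \<longrightarrow>
      deep_score f L M th r A0 relay_weights (relay_output L) y (\<lambda>i. xs (interleave h ke ko i))
      = (if \<forall>t<h. ke t = ko t then 1 else 2)"
    by blast
  have "deep_score f L M th r A0 relay_weights (relay_output L) y \<noteq> shallow_score f N M Z th' a ay y"
    if "real Z < real m ^ (N div 2) * 2 / (real M * real N)" for Z th' a ay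
    using shallow_score_interleave_channel_bound[OF h(1) m(2), where Z = Z and f = f and th = th'
        and a = a and ay = ay and y = y and xs = xs] deep that h(2)
    by auto
  with th show ?thesis unfolding m_def by blast
qed simp \<comment> \<open>for M = 0 the bound divides by zero, so it is 0 and no Z satisfies it\<close>

end
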